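(* Let $V$ be an object of $\mathcal{E}_q^{deg}$ and let $$E_V=\prod_{\alpha:A\hookrightarrow V,\ A\in\mathcal{S}_V\setminus\{V\}}(1+e_\alpha)\in\mathbb{F}_2[\mathrm{End}_{\mathrm{Sp}(\mathcal{E}_q^{deg})}(V)],$$ the product over all proper subobjects of $V$. Then (1) $E_V\cdot E_V=E_V$, and (2) $Q_V\cdot E_V\cong iso_V$; in particular $\mathrm{Hom}_{\mathcal{F}_{iso}}(iso_V,F)\cong F(E_V)\cdot F(V)$ for every $F\in\mathcal{F}_{iso}$.
   Context: $\mathcal{E}$: all $\mathbb{F}_2$-vector spaces. $\mathcal{E}_q^{deg}$: objects finite-dimensional quadratic spaces over $\mathbb{F}_2$ (possibly degenerate), morphisms injective linear maps preserving quadratic forms. $\mathrm{Sp}(\mathcal{E}_q^{deg})$: same objects, morphisms spans $[V\leftarrow D\rightarrow W]$ up to iso of $D$, composed by pullback. $\mathcal{F}_{iso}=\mathrm{Func}(\mathrm{Sp}(\mathcal{E}_q^{deg}),\mathcal{E})$. $\mathcal{S}_V$ is the set of subobjects $\alpha:A\hookrightarrow V$ of $V$ in $\mathcal{E}_q^{deg}$ (linear subspaces with restricted form); $\mathcal{S}_V\setminus\{V\}$ the proper ones. $e_\alpha=[V\xleftarrow{\alpha}A\xrightarrow{\alpha}V]$. $Q_V=\mathbb{F}_2[\mathrm{Hom}_{\mathrm{Sp}(\mathcal{E}_q^{deg})}(V,-)]$, and for $e$ in the monoid algebra of $\mathrm{End}(V)$, $Q_V\cdot e$ is the image of $x\mapsto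 x\circ e$ on $Q_V$. The isotropic functor $iso_V$ is the image of $a_V:Q_V\to DQ_V$, where $DF=(-)^*\circ F\circ tr^{op}$, $tr[V\leftarrow X\rightarrow W]=[W\leftarrow X\rightarrow V]$, and $a_V$ corresponds by Yoneda to the linear form on $\mathbb{F}_2[\mathrm{End}(V)]$ equal to $1$ on $\mathrm{Id}_V$ and $0$ on all other basis elements. *)

theory Defs
  imports Main
begin

type_synonym vec = "nat \<Rightarrow> bool"
type_synonym qobj = "nat \<times> (vec \<Rightarrow> bool)"
  (* an object: dimension n and quadratic form q on F2^n *)
type_synonym mor = "(vec \<times> vec) set"
  (* a morphism of Sp(E_q^deg): a span [V <- D -> W] up to iso of D, represented
     by the image of D in V x W (the graph of a partial injective isometry) *)

definition vadd :: "vec \<Rightarrow> vec \<Rightarrow> vec" where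
  "vadd x y = (\<lambda>i. x i \<noteq> y i)"

definition vzero :: vec where
  "vzero = (\<lambda>i. False)"

definition qcarrier :: "qobj \<Rightarrow> vec set" where
  "qcarrier V = {x. \<forall>i\<ge>fst V. \<not> x i}"

definition qf :: "qobj \<Rightarrow> vec \<Rightarrow> bool" where
  "qf V = snd V"

definition polar :: "qobj \<Rightarrow> vec \<Rightarrow> vec \<Rightarrow> bool" where
  "polar V x y = (qf V (vadd x y) \<noteq> (qf V x \<noteq> qf V y))"

text \<open>Objects of E_q^deg (skeleton): F2^n with a (possibly degenerate) quadratic form,
  normalised to be False outside F2^n.\<close>
definition is_qobj :: "qobj \<Rightarrow> bool" where
  "is_qobj V \<longleftrightarrow>
     (\<forall>x. x \<notin> qcarrier V \<longrightarrow> \<not> qf V x) \<and>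
     \<not> qf V vzero \<and>
     (\<forall>x\<in>qcarrier V. \<forall>y\<in>qcarrier V. \<forall>z\<in>qcarrier V.
        polar V (vadd x y) z = (polar V x z \<noteq> polar V y z))"

definition is_subspace :: "qobj \<Rightarrow> vec set \<Rightarrow> bool" where
  "is_subspace V U \<longleftrightarrow> U \<subseteq> qcarrier V \<and> vzero \<in> U \<and>
     (\<forall>x\<in>U. \<forall>y\<in>U. vadd x y \<in> U)"

definition Hom :: "qobj \<Rightarrow> qobj \<Rightarrow> mor set" where
  "Hom V W = {G. G \<subseteq> qcarrier V \<times> qcarrier W \<and> (vzero, vzero) \<in> G \<and>
      (\<forall>x y x' y'. (x, y) \<in> G \<longrightarrow> (x', y') \<in> G \<longrightarrow> (vadd x x', vadd y y') \<in> G) \<and>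
      (\<forall>x y y'. (x, y) \<in> G \<longrightarrow> (x, y') \<in> G \<longrightarrow> y = y') \<and>
      (\<forall>x x' y. (x, y) \<in> G \<longrightarrow> (x', y) \<in> G \<longrightarrow> x = x') \<and>
      (\<forall>x y. (x, y) \<in> G \<longrightarrow> qf W y = qf V x)}"

text \<open>Composition g o f (pullback of spans = relational composition of graphs).\<close>
definition scomp :: "mor \<Rightarrow> mor \<Rightarrow> mor" where
  "scomp g f = f O g"

definition idm :: "qobj \<Rightarrow> mor" where
  "idm V = Id_on (qcarrier V)"

definition tr :: "mor \<Rightarrow> mor" where
  "tr f = converse f"

definition subobjs :: "qobj \<Rightarrow> vec set set" where
  "subobjs V = {U. is_subspace V U}"

definition proper_subobjs :: "qobj \<Rightarrow> vec set set" where
  "proper_subobjs V = {U \<in> subobjs V. U \<noteq> qcarrier V}"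

definition e_sub :: "vec set \<Rightarrow> mor" where
  "e_sub U = Id_on U"

section \<open>F2-linear combinations of morphisms (finite sets = F2 coefficient vectors)\<close>

definition alg_add :: "mor set \<Rightarrow> mor set \<Rightarrow> mor set" where
  "alg_add X Y = (X - Y) \<union> (Y - X)"

text \<open>bilinear extension of composition: X * Y = sum over a in X, b in Y of a o b\<close>
definition alg_mult :: "mor set \<Rightarrow> mor set \<Rightarrow> mor set" where
  "alg_mult X Y = {h. odd (card {(a, b). a \<in> X \<and> b \<in> Y \<and> scomp a b = h})}"

definition E_elem :: "qobj \<Rightarrow> mor set" where
  "E_elem V = Finite_Set.fold
     (\<lambda>U acc. alg_mult (alg_add {idm V} {e_sub U}) acc) {idm V} (proper_subobjs V)"

text \<open>(Q_V . e)(W) = image of x |-> x o e on Q_V(W) = F2[Hom(V,W)]\<close>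
definition QE :: "qobj \<Rightarrow> mor set \<Rightarrow> qobj \<Rightarrow> mor set set" where
  "QE V e W = (\<lambda>x. alg_mult x e) ` Pow (Hom V W)"

definition Qmap :: "mor \<Rightarrow> mor set \<Rightarrow> mor set" where
  "Qmap h x = alg_mult {h} x"

text \<open>DQ_V(W) = F2[Hom(V,W)]^*; a linear form is represented by the set of basis
  elements on which it takes value 1. a_V(W)(f)(g) = delta_Id(tr f o g),
  extended linearly in f.\<close>
definition aV :: "qobj \<Rightarrow> qobj \<Rightarrow> mor set \<Rightarrow> mor set" where
  "aV V W x = {g \<in> Hom V W. odd (card {f \<in> x. scomp (tr f) g = idm V})}"

definition isoV :: "qobj \<Rightarrow> qobj \<Rightarrow> mor set set" where
  "isoV V W = aV V W ` Pow (Hom V W)"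

text \<open>DQ_V on a morphism h : W -> W': phi |-> phi o Q_V(tr h)\<close>
definition DQmap :: "qobj \<Rightarrow> qobj \<Rightarrow> mor \<Rightarrow> mor set \<Rightarrow> mor set" where
  "DQmap V W' h S = {g' \<in> Hom V W'. scomp (tr h) g' \<in> S}"

definition is_F2space :: "'b::ab_group_add set \<Rightarrow> bool" where
  "is_F2space S \<longleftrightarrow> 0 \<in> S \<and> (\<forall>x\<in>S. \<forall>y\<in>S. x + y \<in> S) \<and> (\<forall>x\<in>S. x + x = 0)"

definition is_functor ::
  "(qobj \<Rightarrow> 'b::ab_group_add set) \<Rightarrow> (qobj \<Rightarrow> qobj \<Rightarrow> mor \<Rightarrow> 'b \<Rightarrow> 'b) \<Rightarrow> bool" where
  "is_functor Fob Fmor \<longleftrightarrow>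
     (\<forall>W. is_qobj W \<longrightarrow> is_F2space (Fob W)) \<and>
     (\<forall>W W' h. is_qobj W \<longrightarrow> is_qobj W' \<longrightarrow> h \<in> Hom W W' \<longrightarrow>
        (\<forall>x\<in>Fob W. Fmor W W' h x \<in> Fob W') \<and>
        (\<forall>x\<in>Fob W. \<forall>y\<in>Fob W. Fmor W W' h (x + y) = Fmor W W' h x + Fmor W W' h y)) \<and>
     (\<forall>W. is_qobj W \<longrightarrow> (\<forall>x\<in>Fob W. Fmor W W (idm W) x = x)) \<and>
     (\<forall>W1 W2 W3 f g. is_qobj W1 \<longrightarrow> is_qobj W2 \<longrightarrow> is_qobj W3 \<longrightarrow>
        f \<in> Hom W1 W2 \<longrightarrow> g \<in> Hom W2 W3 \<longrightarrow>
        (\<forall>x\<in>Fob W1. Fmor W1 W3 (scomp g f) x = Fmor W2 W3 g (Fmor W1 W2 f x)))"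

definition Falg :: "(qobj \<Rightarrow> qobj \<Rightarrow> mor \<Rightarrow> 'b::ab_group_add \<Rightarrow> 'b) \<Rightarrow> qobj \<Rightarrow> mor set \<Rightarrow> 'b \<Rightarrow> 'b" where
  "Falg Fmor V X v = (\<Sum>e\<in>X. Fmor V V e v)"

text \<open>Hom_{F_iso}(iso_V, F): natural transformations, normalised to 0 off their domain\<close>
definition nat_trans_iso ::
  "qobj \<Rightarrow> (qobj \<Rightarrow> 'b::ab_group_add set) \<Rightarrow> (qobj \<Rightarrow> qobj \<Rightarrow> mor \<Rightarrow> 'b \<Rightarrow> 'b)
     \<Rightarrow> (qobj \<Rightarrow> mor set \<Rightarrow> 'b) set" where
  "nat_trans_iso V Fob Fmor = {\<tau>.
     (\<forall>W. \<not> is_qobj W \<longrightarrow> (\<forall>S. \<tau> W S = 0)) \<and>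
     (\<forall>W. is_qobj W \<longrightarrow>
        (\<forall>S\<in>isoV V W. \<tau> W S \<in> Fob W) \<and>
        (\<forall>S. S \<notin> isoV V W \<longrightarrow> \<tau> W S = 0) \<and>
        (\<forall>S\<in>isoV V W. \<forall>T\<in>isoV V W. \<tau> W (alg_add S T) = \<tau> W S + \<tau> W T)) \<and>
     (\<forall>W W' h. is_qobj W \<longrightarrow> is_qobj W' \<longrightarrow> h \<in> Hom W W' \<longrightarrow>
        (\<forall>S\<in>isoV V W. \<tau> W' (DQmap V W' h S) = Fmor W W' h (\<tau> W S)))}"

end

theory Submission
  imports Defs
begin

text \<open>Every \<open>e_\<alpha>\<close> is the identity on a subspace, so the factors \<open>1 + e_\<alpha>\<close> commute and \<open>E_V\<close> is a
  sum of such partial identities in which \<open>Id_V\<close> occurs. As \<open>e_\<alpha> (1 + e_\<alpha>) = 0\<close>, every \<open>e_\<alpha>\<close>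
  annihilates \<open>E_V\<close>; hence \<open>E_V\<close> is idempotent, and \<open>g E_V = 0\<close> for every morphism \<open>g\<close> whose
  domain is a proper subspace, because \<open>g = g e_(dom g)\<close>. So \<open>x E_V\<close> only depends on the part of
  \<open>x\<close> supported on total morphisms, i.e. embeddings \<open>V \<rightarrow> W\<close> of \<open>E_q^deg\<close>; and since
  \<open>tr f \<circ> g = Id_V\<close> holds exactly when \<open>f = g\<close> is total, \<open>a_V\<close> maps \<open>Q_V E_V\<close> isomorphically onto
  \<open>iso_V\<close>, the span of the embeddings.

  The description of \<open>Hom(iso_V, F)\<close> is then Yoneda's lemma: a natural transformation is determined
  by its value \<open>w\<close> at \<open>{Id_V}\<close>, which satisfies \<open>F(E_V) w = w\<close>; conversely every \<open>F(E_V) u\<close>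
  extends to one, since \<open>F(g) F(E_V) u = 0\<close> for non-total \<open>g\<close>.\<close>

section \<open>The group algebra of relations over F2\<close>

lemma odd_card_sym_diff:
  assumes "finite A" "finite B"
  shows "odd (card (sym_diff A B)) \<longleftrightarrow> odd (card A) \<noteq> odd (card B)"
proof -
  have "card (sym_diff A B) = card (A - B) + card (B - A)"
    using assms by (intro card_Un_disjoint) auto
  moreover have "card A = card (A \<inter> B) + card (A - B)" "card B = card (B \<inter> A) + card (B - A)"
    using assms by (simp_all add: card_Int_Diff)
  ultimately show ?thesis by (auto simp: Int_commute)
qed

lemma alg_add_simps [simp]: "alg_add X {} = X" "alg_add {} X = X" "alg_add X X = {}"
  by (auto simp: alg_add_def)

lemma finite_alg_add [simp]: "finite X \<Longrightarrow> finite Y \<Longrightarrow> finite (alg_add X Y)"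
  by (auto simp: alg_add_def)

lemma insert_eq_alg_add: "x \<notin> X \<Longrightarrow> insert x X = alg_add {x} X"
  by (auto simp: alg_add_def)

lemma alg_mult_subset: "alg_mult X Y \<subseteq> (\<lambda>(a, b). scomp a b) ` (X \<times> Y)"
proof
  fix h assume "h \<in> alg_mult X Y"
  then have "{(a, b). a \<in> X \<and> b \<in> Y \<and> scomp a b = h} \<noteq> {}"
    unfolding alg_mult_def by (intro notI) simp
  then show "h \<in> (\<lambda>(a, b). scomp a b) ` (X \<times> Y)" by force
qed

lemma alg_multE:
  assumes "h \<in> alg_mult X Y"
  obtains a b where "a \<in> X" "b \<in> Y" "h = scomp a b"
  using alg_mult_subset assms by blast

lemma finite_alg_mult [simp]: "finite X \<Longrightarrow> finite Y \<Longrightarrow> finite (alg_mult X Y)"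
  using alg_mult_subset by (rule finite_subset) auto

lemma alg_mult_empty [simp]: "alg_mult {} Y = {}" "alg_mult X {} = {}"
  by (auto simp: alg_mult_def)

lemma alg_mult_singletons: "alg_mult {a} {b} = {scomp a b}"
proof -
  have "{(a', b'). a' \<in> {a} \<and> b' \<in> {b} \<and> scomp a' b' = h} = (if h = scomp a b then {(a, b)} else {})"
    for h by auto
  then show ?thesis by (auto simp: alg_mult_def)
qed

lemma alg_mult_singleton_left: "alg_mult {a} X = {h. odd (card {b \<in> X. scomp a b = h})}"
proof -
  have "{(a', b). a' \<in> {a} \<and> b \<in> X \<and> scomp a' b = h} = Pair a ` {b \<in> X. scomp a b = h}" for h
    by auto
  moreover have "card (Pair a ` B) = card B" for B :: "mor set"
    by (rule card_image) (auto simp: inj_on_def)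
  ultimately show ?thesis by (simp add: alg_mult_def)
qed

lemma alg_mult_add_left:
  assumes "finite X" "finite Y" "finite Z"
  shows "alg_mult (alg_add X Y) Z = alg_add (alg_mult X Z) (alg_mult Y Z)"
proof -
  have "odd (card (P (alg_add X Y))) \<longleftrightarrow> odd (card (P X)) \<noteq> odd (card (P Y))"
    if "P = (\<lambda>X. {(a, b). a \<in> X \<and> b \<in> Z \<and> scomp a b = h})" for P h
  proof -
    have "P (alg_add X Y) = sym_diff (P X) (P Y)" by (auto simp: that alg_add_def)
    moreover have "finite (P W)" if "finite W" for W
      using \<open>finite W\<close> \<open>finite Z\<close> by (auto simp: \<open>P = _\<close> intro: finite_subset[of _ "W \<times> Z"])
    ultimately show ?thesis using assms by (simp add: odd_card_sym_diff)
  qed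
  then show ?thesis by (auto simp: alg_mult_def alg_add_def)
qed

lemma alg_mult_add_right:
  assumes "finite X" "finite Y" "finite Z"
  shows "alg_mult Z (alg_add X Y) = alg_add (alg_mult Z X) (alg_mult Z Y)"
proof -
  have "odd (card (P (alg_add X Y))) \<longleftrightarrow> odd (card (P X)) \<noteq> odd (card (P Y))"
    if "P = (\<lambda>X. {(a, b). a \<in> Z \<and> b \<in> X \<and> scomp a b = h})" for P h
  proof -
    have "P (alg_add X Y) = sym_diff (P X) (P Y)" by (auto simp: that alg_add_def)
    moreover have "finite (P W)" if "finite W" for W
      using \<open>finite W\<close> \<open>finite Z\<close> by (auto simp: \<open>P = _\<close> intro: finite_subset[of _ "Z \<times> W"])
    ultimately show ?thesis using assms by (simp add: odd_card_sym_diff)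
  qed
  then show ?thesis by (auto simp: alg_mult_def alg_add_def)
qed

lemma scomp_assoc: "scomp (scomp a b) c = scomp a (scomp b c)"
  by (simp add: scomp_def O_assoc)

lemma alg_mult_assoc:
  assumes "finite X" "finite Y" "finite Z"
  shows "alg_mult (alg_mult X Y) Z = alg_mult X (alg_mult Y Z)"
proof -
  have singletons: "alg_mult (alg_mult {x} {y}) Z = alg_mult {x} (alg_mult {y} Z)" for x y
    using \<open>finite Z\<close>
  proof (induction Z rule: finite_induct)
    case (insert z Z)
    then show ?case
      by (simp add: insert_eq_alg_add[OF insert(2)] alg_mult_add_right alg_mult_singletons scomp_assoc)
  qed simp
  have singleton: "alg_mult (alg_mult {x} Y) Z = alg_mult {x} (alg_mult Y Z)" for x
    using \<open>finite Y\<close>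
  proof (induction Y rule: finite_induct)
    case (insert y Y)
    then show ?case
      using singletons \<open>finite Z\<close>
      by (simp add: insert_eq_alg_add[OF insert(2)] alg_mult_add_right alg_mult_add_left)
  qed simp
  show ?thesis
    using \<open>finite X\<close>
  proof (induction X rule: finite_induct)
    case (insert x X)
    then show ?case
      using singleton assms(2,3) by (simp add: insert_eq_alg_add[OF insert(2)] alg_mult_add_left)
  qed simp
qed

lemma alg_mult_left_neutral:
  assumes "\<And>b. b \<in> X \<Longrightarrow> scomp a b = b"
  shows "alg_mult {a} X = X"
proof -
  have "{b \<in> X. scomp a b = h} = (if h \<in> X then {h} else {})" for h
    using assms by auto
  then show ?thesis by (auto simp: alg_mult_singleton_left)
qed

lemma alg_mult_right_neutral:
  assumes "\<And>a. a \<in> X \<Longrightarrow> scomp a b = a"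
  shows "alg_mult X {b} = X"
proof -
  have "{(a, b'). a \<in> X \<and> b' \<in> {b} \<and> scomp a b' = h} = (if h \<in> X then {(h, b)} else {})" for h
    using assms by auto
  then show ?thesis by (auto simp: alg_mult_def)
qed

lemma alg_mult_eq_emptyI:
  assumes "finite X" "finite Y" "\<And>a. a \<in> X \<Longrightarrow> alg_mult {a} Y = {}"
  shows "alg_mult X Y = {}"
  using assms
proof (induction X rule: finite_induct)
  case (insert x X)
  have "alg_mult (insert x X) Y = alg_add (alg_mult {x} Y) (alg_mult X Y)"
    using insert(1) \<open>finite Y\<close> by (simp add: insert_eq_alg_add[OF insert(2)] alg_mult_add_left)
  with insert show ?case by simp
qed simp

lemma alg_mult_commute:
  assumes "\<And>a b. a \<in> X \<Longrightarrow> b \<in> Y \<Longrightarrow> scomp a b = scomp b a"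
  shows "alg_mult X Y = alg_mult Y X"
proof -
  have "{(a, b). a \<in> Y \<and> b \<in> X \<and> scomp a b = h} = prod.swap ` {(a, b). a \<in> X \<and> b \<in> Y \<and> scomp a b = h}"
    for h using assms by force
  then show ?thesis by (simp add: alg_mult_def card_image)
qed

section \<open>Morphisms and embeddings\<close>

lemma finite_qcarrier [simp]: "finite (qcarrier V)"
proof -
  have "qcarrier V \<subseteq> (\<lambda>A i. i \<in> A) ` Pow {..<fst V}"
  proof
    fix x assume "x \<in> qcarrier V"
    then have "{i. x i} \<in> Pow {..<fst V}" by (auto simp: qcarrier_def not_less[symmetric])
    moreover have "x = (\<lambda>i. i \<in> {i. x i})" by auto
    ultimately show "x \<in> (\<lambda>A i. i \<in> A) ` Pow {..<fst V}" by blast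
  qed
  then show ?thesis by (rule finite_subset) auto
qed

lemma HomD:
  assumes "f \<in> Hom V W"
  shows "f \<subseteq> qcarrier V \<times> qcarrier W" "(vzero, vzero) \<in> f"
    "\<And>x y x' y'. (x, y) \<in> f \<Longrightarrow> (x', y') \<in> f \<Longrightarrow> (vadd x x', vadd y y') \<in> f"
    "\<And>x y y'. (x, y) \<in> f \<Longrightarrow> (x, y') \<in> f \<Longrightarrow> y = y'"
    "\<And>x x' y. (x, y) \<in> f \<Longrightarrow> (x', y) \<in> f \<Longrightarrow> x = x'"
    "\<And>x y. (x, y) \<in> f \<Longrightarrow> qf W y = qf V x"
  using assms unfolding Hom_def mem_Collect_eq by blast+

lemma HomI:
  assumes "f \<subseteq> qcarrier V \<times> qcarrier W" "(vzero, vzero) \<in> f"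
    "\<And>x y x' y'. (x, y) \<in> f \<Longrightarrow> (x', y') \<in> f \<Longrightarrow> (vadd x x', vadd y y') \<in> f"
    "\<And>x y y'. (x, y) \<in> f \<Longrightarrow> (x, y') \<in> f \<Longrightarrow> y = y'"
    "\<And>x x' y. (x, y) \<in> f \<Longrightarrow> (x', y) \<in> f \<Longrightarrow> x = x'"
    "\<And>x y. (x, y) \<in> f \<Longrightarrow> qf W y = qf V x"
  shows "f \<in> Hom V W"
  using assms unfolding Hom_def mem_Collect_eq by blast

lemma finite_Hom [simp]: "finite (Hom V W)"
proof -
  have "Hom V W \<subseteq> Pow (qcarrier V \<times> qcarrier W)" by (auto simp: Hom_def)
  then show ?thesis by (rule finite_subset) auto
qed

lemma finite_subset_Hom: "X \<subseteq> Hom V W \<Longrightarrow> finite X"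
  using finite_Hom finite_subset by blast

lemma subobjs_subset: "S \<in> subobjs V \<Longrightarrow> S \<subseteq> qcarrier V"
  by (auto simp: subobjs_def is_subspace_def)

lemma finite_subobjs [simp]: "finite (subobjs V)"
proof -
  have "subobjs V \<subseteq> Pow (qcarrier V)" using subobjs_subset by blast
  then show ?thesis by (rule finite_subset) simp
qed

lemma finite_proper_subobjs [simp]: "finite (proper_subobjs V)"
  by (rule finite_subset[of _ "subobjs V"]) (auto simp: proper_subobjs_def)

lemma proper_subobjsD: "U \<in> proper_subobjs V \<Longrightarrow> U \<in> subobjs V \<and> U \<subset> qcarrier V"
  unfolding proper_subobjs_def using subobjs_subset by blast

lemma qcarrier_in_subobjs: "qcarrier V \<in> subobjs V"
  by (auto simp: subobjs_def is_subspace_def qcarrier_def vzero_def vadd_def)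

lemma subobjs_Int: "S \<in> subobjs V \<Longrightarrow> T \<in> subobjs V \<Longrightarrow> S \<inter> T \<in> subobjs V"
  by (auto simp: subobjs_def is_subspace_def)

lemma scomp_in_Hom:
  assumes "f \<in> Hom W1 W2" "g \<in> Hom W2 W3"
  shows "scomp g f \<in> Hom W1 W3"
proof -
  note f = HomD[OF assms(1)] and g = HomD[OF assms(2)]
  show ?thesis unfolding scomp_def
  proof (rule HomI)
    show "f O g \<subseteq> qcarrier W1 \<times> qcarrier W3" using f(1) g(1) by blast
    show "(vzero, vzero) \<in> f O g" using f(2) g(2) by blast
  next
    fix x y x' y' assume "(x, y) \<in> f O g" "(x', y') \<in> f O g"
    then show "(vadd x x', vadd y y') \<in> f O g" using f(3) g(3) by blast
  next
    fix x y y' assume "(x, y) \<in> f O g" "(x, y') \<in> f O g"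
    then show "y = y'" using f(4) g(4) by blast
  next
    fix x x' y assume "(x, y) \<in> f O g" "(x', y) \<in> f O g"
    then show "x = x'" using f(5) g(5) by blast
  next
    fix x y assume "(x, y) \<in> f O g"
    then show "qf W3 y = qf W1 x" using f(6) g(6) by force
  qed
qed

lemma alg_mult_subset_Hom:
  assumes "X \<subseteq> Hom W W'" "Y \<subseteq> Hom V W"
  shows "alg_mult X Y \<subseteq> Hom V W'"
proof
  fix h assume "h \<in> alg_mult X Y"
  then obtain a b where "a \<in> X" "b \<in> Y" "h = scomp a b" by (rule alg_multE)
  then show "h \<in> Hom V W'" using assms scomp_in_Hom by blast
qed

lemma Id_on_in_Hom: "S \<in> subobjs V \<Longrightarrow> Id_on S \<in> Hom V V"
  by (auto simp: Hom_def subobjs_def is_subspace_def)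

lemma idm_in_Hom: "idm V \<in> Hom V V"
  using Id_on_in_Hom[OF qcarrier_in_subobjs] by (simp add: idm_def)

lemma scomp_Id_on: "scomp (Id_on S) (Id_on T) = Id_on (S \<inter> T)"
  by (auto simp: scomp_def)

lemma scomp_idm_right: "g \<in> Hom V W \<Longrightarrow> scomp g (idm V) = g"
  by (auto simp: Hom_def scomp_def idm_def)

lemma scomp_Id_on_Domain: "scomp g (Id_on (Domain g)) = g"
  by (auto simp: scomp_def)

text \<open>A span whose graph is defined on all of \<open>V\<close> has an isomorphism as its left leg: these are
  exactly the morphisms of \<open>E_q^deg\<close> (injective isometries), viewed in the span category.\<close>

definition total :: "qobj \<Rightarrow> mor \<Rightarrow> bool" where
  "total V g \<longleftrightarrow> qcarrier V \<subseteq> Domain g"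

definition embeddings :: "qobj \<Rightarrow> qobj \<Rightarrow> mor set" where
  "embeddings V W = {g \<in> Hom V W. total V g}"

lemma embeddings_subset_Hom: "embeddings V W \<subseteq> Hom V W"
  by (auto simp: embeddings_def)

lemma finite_embeddings [simp]: "finite (embeddings V W)"
  using embeddings_subset_Hom by (rule finite_subset_Hom)

lemma idm_in_embeddings: "idm V \<in> embeddings V V"
  using idm_in_Hom by (auto simp: embeddings_def total_def idm_def)

lemma total_scompD: "total V (scomp h g) \<Longrightarrow> total V g"
  by (auto simp: total_def scomp_def)

lemma not_total_scomp_Id_on: "S \<subset> qcarrier V \<Longrightarrow> \<not> total V (scomp g (Id_on S))"
  by (auto simp: total_def scomp_def)

lemma Domain_in_proper_subobjs:
  assumes "g \<in> Hom V W" "\<not> total V g"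
  shows "Domain g \<in> proper_subobjs V"
proof -
  have "vadd x y \<in> Domain g" if "x \<in> Domain g" "y \<in> Domain g" for x y
    using that HomD(3)[OF assms(1)] by blast
  moreover have "Domain g \<subseteq> qcarrier V" "vzero \<in> Domain g"
    using HomD(1,2)[OF assms(1)] by auto
  ultimately show ?thesis
    using assms(2) by (auto simp: proper_subobjs_def subobjs_def is_subspace_def total_def)
qed

lemma tr_scomp_eq_idm_iff:
  assumes "f \<in> Hom V W" "g \<in> Hom V W"
  shows "scomp (tr f) g = idm V \<longleftrightarrow> f = g \<and> total V g"
proof
  assume "scomp (tr f) g = idm V"
  then have diag: "(x, z) \<in> g O converse f \<longleftrightarrow> x \<in> qcarrier V \<and> z = x" for x z
    by (auto simp: scomp_def tr_def idm_def)
  have "(x, y) \<in> g" if "(x, y) \<in> f" for x y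
  proof -
    have "x \<in> qcarrier V" using that HomD(1)[OF assms(1)] by blast
    then obtain y' where "(x, y') \<in> g" "(x, y') \<in> f" using diag[of x x] by auto
    then show ?thesis using that HomD(4)[OF assms(1)] by blast
  qed
  moreover have "(x, y) \<in> f" if "(x, y) \<in> g" for x y
  proof -
    have "x \<in> qcarrier V" using that HomD(1)[OF assms(2)] by blast
    then obtain y' where "(x, y') \<in> g" "(x, y') \<in> f" using diag[of x x] by auto
    then show ?thesis using that HomD(4)[OF assms(2)] by blast
  qed
  moreover have "total V g" using diag by (auto simp: total_def)
  ultimately show "f = g \<and> total V g" by auto
next
  assume "f = g \<and> total V g"
  then have "f = g" and "qcarrier V \<subseteq> Domain g" by (auto simp: total_def)
  have "x = z \<and> x \<in> qcarrier V" if "(x, y) \<in> g" "(z, y) \<in> g" for x y z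
    using that HomD(1,5)[OF assms(2)] by blast
  moreover have "(x, x) \<in> g O converse g" if "x \<in> qcarrier V" for x
    using that \<open>qcarrier V \<subseteq> Domain g\<close> by blast
  ultimately show "scomp (tr f) g = idm V"
    unfolding \<open>f = g\<close> scomp_def tr_def idm_def by blast
qed

lemma aV_eq_Int_embeddings: "x \<subseteq> Hom V W \<Longrightarrow> aV V W x = x \<inter> embeddings V W"
proof -
  assume x: "x \<subseteq> Hom V W"
  have "{f \<in> x. scomp (tr f) g = idm V} = (if g \<in> x \<and> total V g then {g} else {})"
    if "g \<in> Hom V W" for g
    using tr_scomp_eq_idm_iff[OF _ that] x by auto
  then have "odd (card {f \<in> x. scomp (tr f) g = idm V}) \<longleftrightarrow> g \<in> x \<and> total V g"
    if "g \<in> Hom V W" for g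
    using that by simp
  then show ?thesis using x by (auto simp: aV_def embeddings_def)
qed

lemma isoV_eq_Pow_embeddings: "isoV V W = Pow (embeddings V W)"
proof
  show "isoV V W \<subseteq> Pow (embeddings V W)"
    unfolding isoV_def by (auto simp: aV_eq_Int_embeddings)
  show "Pow (embeddings V W) \<subseteq> isoV V W"
  proof
    fix S assume "S \<in> Pow (embeddings V W)"
    then have "S \<subseteq> embeddings V W" by simp
    then have "S \<in> Pow (Hom V W)" using embeddings_subset_Hom by blast
    moreover have "S = aV V W S"
      using \<open>S \<subseteq> embeddings V W\<close> calculation by (simp add: aV_eq_Int_embeddings Int_absorb2)
    ultimately show "S \<in> isoV V W" unfolding isoV_def by (rule rev_image_eqI)
  qed
qed

lemma tr_scomp_scomp_cancel:
  assumes "h \<in> Hom W W'" "g \<in> Hom V W" "total V (scomp h g)"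
  shows "scomp (tr h) (scomp h g) = g"
proof (intro set_eqI iffI)
  fix p assume "p \<in> scomp (tr h) (scomp h g)"
  then obtain x w w' z where "p = (x, w')" "(x, w) \<in> g" "(w, z) \<in> h" "(w', z) \<in> h"
    by (auto simp: scomp_def tr_def)
  then show "p \<in> g" using HomD(5)[OF assms(1)] by blast
next
  fix p assume "p \<in> g"
  then obtain x w where p: "p = (x, w)" "(x, w) \<in> g" by (cases p) auto
  then have "x \<in> qcarrier V" using HomD(1)[OF assms(2)] by blast
  then obtain w' z where "(x, w') \<in> g" "(w', z) \<in> h"
    using assms(3) by (auto simp: total_def scomp_def)
  moreover from this have "w' = w" using p HomD(4)[OF assms(2)] by blast
  ultimately show "p \<in> scomp (tr h) (scomp h g)"
    using p by (auto simp: scomp_def tr_def)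
qed

lemma scomp_tr_scomp_cancel:
  assumes "h \<in> Hom W W'" "k \<in> Hom V W'" "total V (scomp (tr h) k)"
  shows "scomp h (scomp (tr h) k) = k"
proof (intro set_eqI iffI)
  fix p assume "p \<in> scomp h (scomp (tr h) k)"
  then obtain x z w z' where "p = (x, z)" "(x, z') \<in> k" "(w, z') \<in> h" "(w, z) \<in> h"
    by (auto simp: scomp_def tr_def)
  then show "p \<in> k" using HomD(4)[OF assms(1)] by blast
next
  fix p assume "p \<in> k"
  then obtain x z where p: "p = (x, z)" "(x, z) \<in> k" by (cases p) auto
  then have "x \<in> qcarrier V" using HomD(1)[OF assms(2)] by blast
  then obtain w z' where "(x, z') \<in> k" "(w, z') \<in> h"
    using assms(3) by (auto simp: total_def scomp_def tr_def)
  moreover from this have "z' = z" using p HomD(4)[OF assms(2)] by blast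
  ultimately show "p \<in> scomp h (scomp (tr h) k)"
    using p by (auto simp: scomp_def tr_def)
qed

section \<open>The idempotent \<open>E_V\<close>\<close>

definition subobj_idems :: "qobj \<Rightarrow> mor set" where
  "subobj_idems V = Id_on ` subobjs V"

lemma finite_subobj_idems [simp]: "finite (subobj_idems V)"
  by (simp add: subobj_idems_def)

lemma idm_in_subobj_idems: "idm V \<in> subobj_idems V"
  using qcarrier_in_subobjs by (auto simp: subobj_idems_def idm_def)

lemma e_sub_in_subobj_idems: "U \<in> subobjs V \<Longrightarrow> e_sub U \<in> subobj_idems V"
  by (simp add: subobj_idems_def e_sub_def)

lemma subobj_idems_subset_Hom: "subobj_idems V \<subseteq> Hom V V"
  unfolding subobj_idems_def using Id_on_in_Hom by blast

lemma alg_mult_subobj_idems: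
  assumes "X \<subseteq> subobj_idems V" "Y \<subseteq> subobj_idems V"
  shows "alg_mult X Y \<subseteq> subobj_idems V"
proof
  fix h assume "h \<in> alg_mult X Y"
  then obtain a b where "a \<in> X" "b \<in> Y" and h: "h = scomp a b" by (rule alg_multE)
  then obtain S T where "S \<in> subobjs V" "T \<in> subobjs V" "a = Id_on S" "b = Id_on T"
    using assms unfolding subobj_idems_def by (meson imageE subsetD)
  then have "h = Id_on (S \<inter> T)" "S \<inter> T \<in> subobjs V"
    using h by (simp_all add: scomp_Id_on subobjs_Int)
  then show "h \<in> subobj_idems V" by (simp add: subobj_idems_def)
qed

lemma alg_mult_idm_left:
  assumes "X \<subseteq> subobj_idems V"
  shows "alg_mult {idm V} X = X"
proof (rule alg_mult_left_neutral)
  fix b assume "b \<in> X"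
  then obtain S where "S \<in> subobjs V" "b = Id_on S"
    using assms unfolding subobj_idems_def by (meson imageE subsetD)
  then show "scomp (idm V) b = b" by (simp add: idm_def scomp_Id_on Int_absorb1 subobjs_subset)
qed

text \<open>\<open>Finite_Set.fold\<close> needs left-commutativity on all arguments, but \<open>alg_mult\<close> is associative
  only on finite sets; so we fold a factor map that is the identity on infinite sets.\<close>

definition E_factor :: "qobj \<Rightarrow> vec set \<Rightarrow> mor set \<Rightarrow> mor set" where
  "E_factor V U acc = (if finite acc then alg_mult (alg_add {idm V} {e_sub U}) acc else acc)"

interpretation E_factor: comp_fun_commute "E_factor V" for V
proof
  fix U U'
  let ?A = "alg_add {idm V} {e_sub U}" and ?A' = "alg_add {idm V} {e_sub U'}"
  have factors_commute: "alg_mult ?A' ?A = alg_mult ?A ?A'"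
    by (rule alg_mult_commute) (auto simp: alg_add_def idm_def e_sub_def scomp_Id_on Int_commute)
  have "E_factor V U' (E_factor V U acc) = E_factor V U (E_factor V U' acc)" for acc
  proof (cases "finite acc")
    case True
    then have "E_factor V U' (E_factor V U acc) = alg_mult (alg_mult ?A' ?A) acc"
      "E_factor V U (E_factor V U' acc) = alg_mult (alg_mult ?A ?A') acc"
      by (simp_all add: E_factor_def alg_mult_assoc)
    then show ?thesis using factors_commute by simp
  qed (simp add: E_factor_def)
  then show "E_factor V U' \<circ> E_factor V U = E_factor V U \<circ> E_factor V U'" by auto
qed

lemma E_elem_eq_fold: "E_elem V = Finite_Set.fold (E_factor V) {idm V} (proper_subobjs V)"
  unfolding E_elem_def by (rule fold_closed_eq[where B = "Collect finite"]) (auto simp: E_factor_def)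

lemma fold_E_factor_subobj_idems:
  assumes "A \<subseteq> proper_subobjs V"
  shows "Finite_Set.fold (E_factor V) {idm V} A \<subseteq> subobj_idems V \<and>
    idm V \<in> Finite_Set.fold (E_factor V) {idm V} A"
proof -
  have "finite A" using assms finite_proper_subobjs finite_subset by blast
  then show ?thesis using assms
  proof (induction A rule: finite_induct)
    case empty
    then show ?case using idm_in_subobj_idems by simp
  next
    case (insert U A)
    define acc where "acc = Finite_Set.fold (E_factor V) {idm V} A"
    have acc: "acc \<subseteq> subobj_idems V" "idm V \<in> acc" using insert by (auto simp: acc_def)
    then have "finite acc" using finite_subobj_idems finite_subset by blast
    have U: "U \<in> subobjs V" "U \<subset> qcarrier V" using insert proper_subobjsD by auto
    have "Finite_Set.fold (E_factor V) {idm V} (insert U A) = E_factor V U acc"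
      unfolding acc_def using insert(1,2) by (rule E_factor.fold_insert)
    also have "\<dots> = alg_add acc (alg_mult {e_sub U} acc)"
      using acc \<open>finite acc\<close> by (simp add: E_factor_def alg_mult_add_left alg_mult_idm_left)
    finally have fold_eq: "Finite_Set.fold (E_factor V) {idm V} (insert U A) = alg_add acc (alg_mult {e_sub U} acc)" .
    have "alg_mult {e_sub U} acc \<subseteq> subobj_idems V"
      using acc(1) e_sub_in_subobj_idems[OF U(1)] by (intro alg_mult_subobj_idems) auto
    moreover have "idm V \<notin> alg_mult {e_sub U} acc"
    proof
      assume "idm V \<in> alg_mult {e_sub U} acc"
      then obtain b where "idm V = scomp (e_sub U) b" by (auto elim: alg_multE)
      then have "Range (idm V) \<subseteq> U" by (auto simp: scomp_def e_sub_def)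
      then show False using U(2) by (auto simp: idm_def)
    qed
    ultimately show ?case using fold_eq acc by (auto simp: alg_add_def)
  qed
qed

lemma E_elem_subset_subobj_idems: "E_elem V \<subseteq> subobj_idems V"
  and idm_in_E_elem: "idm V \<in> E_elem V"
  using fold_E_factor_subobj_idems[OF order_refl] by (auto simp: E_elem_eq_fold)

lemma finite_E_elem [simp]: "finite (E_elem V)"
  using E_elem_subset_subobj_idems finite_subobj_idems by (rule finite_subset)

lemma E_elem_subset_Hom: "E_elem V \<subseteq> Hom V V"
  using E_elem_subset_subobj_idems subobj_idems_subset_Hom by blast

lemma e_sub_mult_E_elem:
  assumes "U \<in> proper_subobjs V"
  shows "alg_mult {e_sub U} (E_elem V) = {}"
proof -
  define R where "R = Finite_Set.fold (E_factor V) {idm V} (proper_subobjs V - {U})"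
  have "R \<subseteq> subobj_idems V"
    using fold_E_factor_subobj_idems[of "proper_subobjs V - {U}" V] unfolding R_def by blast
  then have "finite R" by (rule finite_subset) simp
  have "E_elem V = E_factor V U R"
    unfolding E_elem_eq_fold R_def using assms
    by (intro E_factor.fold_rec) auto
  then have E: "E_elem V = alg_mult (alg_add {idm V} {e_sub U}) R"
    using \<open>finite R\<close> by (simp add: E_factor_def)
  have "U \<subseteq> qcarrier V" using proper_subobjsD[OF assms] by blast
  then have "alg_mult {e_sub U} (alg_add {idm V} {e_sub U}) = {}"
    by (simp add: alg_mult_add_right alg_mult_singletons e_sub_def idm_def scomp_Id_on Int_absorb2)
  moreover have "alg_mult {e_sub U} (E_elem V) = alg_mult (alg_mult {e_sub U} (alg_add {idm V} {e_sub U})) R"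
    unfolding E using \<open>finite R\<close> by (simp add: alg_mult_assoc)
  ultimately show ?thesis by simp
qed

lemma E_elem_minus_idm: "b \<in> E_elem V - {idm V} \<Longrightarrow> \<exists>U\<in>proper_subobjs V. b = e_sub U"
  using E_elem_subset_subobj_idems[of V]
  by (auto simp: subobj_idems_def proper_subobjs_def idm_def e_sub_def)

lemma alg_add_idm_E_elem_minus_idm: "alg_add {idm V} (E_elem V - {idm V}) = E_elem V"
  using idm_in_E_elem[of V] by (auto simp: alg_add_def)

lemma E_elem_idem: "alg_mult (E_elem V) (E_elem V) = E_elem V"
proof -
  let ?R = "E_elem V - {idm V}"
  have "alg_mult (E_elem V) (E_elem V) = alg_mult (alg_add {idm V} ?R) (E_elem V)"
    by (simp only: alg_add_idm_E_elem_minus_idm)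
  also have "\<dots> = alg_add (alg_mult {idm V} (E_elem V)) (alg_mult ?R (E_elem V))"
    by (rule alg_mult_add_left) auto
  finally have "alg_mult (E_elem V) (E_elem V) =
      alg_add (alg_mult {idm V} (E_elem V)) (alg_mult ?R (E_elem V))" .
  moreover have "alg_mult ?R (E_elem V) = {}"
  proof (rule alg_mult_eq_emptyI)
    fix a assume "a \<in> ?R"
    then obtain U where "U \<in> proper_subobjs V" "a = e_sub U" using E_elem_minus_idm by blast
    then show "alg_mult {a} (E_elem V) = {}" by (simp add: e_sub_mult_E_elem)
  qed auto
  moreover have "alg_mult {idm V} (E_elem V) = E_elem V"
    by (rule alg_mult_idm_left[OF E_elem_subset_subobj_idems])
  ultimately show ?thesis by simp
qed

text \<open>A morphism factors through the identity on its domain, which \<open>E_V\<close> kills unless it is total.\<close>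

lemma not_total_mult_E_elem:
  assumes "g \<in> Hom V W" "\<not> total V g"
  shows "alg_mult {g} (E_elem V) = {}"
proof -
  have "alg_mult {g} (E_elem V) = alg_mult (alg_mult {g} {e_sub (Domain g)}) (E_elem V)"
    by (simp add: alg_mult_singletons e_sub_def scomp_Id_on_Domain)
  also have "\<dots> = alg_mult {g} (alg_mult {e_sub (Domain g)} (E_elem V))"
    by (rule alg_mult_assoc) auto
  finally show ?thesis
    using e_sub_mult_E_elem[OF Domain_in_proper_subobjs[OF assms]] by simp
qed


lemma alg_mult_E_elem_Int_embeddings:
  assumes "z \<subseteq> Hom V W"
  shows "alg_mult z (E_elem V) \<inter> embeddings V W = z \<inter> embeddings V W"
proof -
  let ?R = "E_elem V - {idm V}"
  have "alg_mult z (E_elem V) = alg_mult z (alg_add {idm V} ?R)"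
    by (simp only: alg_add_idm_E_elem_minus_idm)
  also have "\<dots> = alg_add (alg_mult z {idm V}) (alg_mult z ?R)"
    using finite_subset_Hom[OF assms] by (intro alg_mult_add_right) auto
  also have "alg_mult z {idm V} = z"
    using assms scomp_idm_right by (intro alg_mult_right_neutral) blast
  finally have split: "alg_mult z (E_elem V) = alg_add z (alg_mult z ?R)" .
  have "\<not> total V h" if "h \<in> alg_mult z ?R" for h
  proof -
    from that obtain a b where "b \<in> ?R" "h = scomp a b" by (rule alg_multE)
    moreover obtain U where "U \<in> proper_subobjs V" "b = e_sub U"
      using E_elem_minus_idm \<open>b \<in> ?R\<close> by blast
    ultimately show ?thesis using not_total_scomp_Id_on proper_subobjsD by (simp add: e_sub_def)
  qed
  then have "alg_mult z ?R \<inter> embeddings V W = {}" by (auto simp: embeddings_def)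
  then show ?thesis unfolding split by (auto simp: alg_add_def)
qed

lemma alg_mult_E_elem_eq_Int_embeddings:
  assumes "z \<subseteq> Hom V W"
  shows "alg_mult z (E_elem V) = alg_mult (z \<inter> embeddings V W) (E_elem V)"
proof -
  have "finite z" using assms by (rule finite_subset_Hom)
  have "alg_mult z (E_elem V) = alg_mult (alg_add (z \<inter> embeddings V W) (z - embeddings V W)) (E_elem V)"
    by (rule arg_cong[where f = "\<lambda>X. alg_mult X (E_elem V)"]) (auto simp: alg_add_def)
  also have "\<dots> = alg_add (alg_mult (z \<inter> embeddings V W) (E_elem V))
      (alg_mult (z - embeddings V W) (E_elem V))"
    using \<open>finite z\<close> by (intro alg_mult_add_left) auto
  also have "alg_mult (z - embeddings V W) (E_elem V) = {}"
  proof (rule alg_mult_eq_emptyI)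
    fix g assume "g \<in> z - embeddings V W"
    then show "alg_mult {g} (E_elem V) = {}"
      using assms by (intro not_total_mult_E_elem) (auto simp: embeddings_def)
  qed (use \<open>finite z\<close> in auto)
  finally show ?thesis by simp
qed

lemma aV_alg_mult_E_elem:
  assumes "z \<subseteq> Hom V W"
  shows "aV V W (alg_mult z (E_elem V)) = z \<inter> embeddings V W"
proof -
  have "alg_mult z (E_elem V) \<subseteq> Hom V W"
    using assms E_elem_subset_Hom by (rule alg_mult_subset_Hom)
  then show ?thesis using assms by (simp add: aV_eq_Int_embeddings alg_mult_E_elem_Int_embeddings)
qed

section \<open>\<open>Q_V E_V\<close> is isomorphic to \<open>iso_V\<close>\<close>

lemma QE_iff: "x \<in> QE V e W \<longleftrightarrow> (\<exists>z. z \<subseteq> Hom V W \<and> x = alg_mult z e)"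
  by (auto simp: QE_def)

lemma aV_bij_betw_QE_isoV: "bij_betw (aV V W) (QE V (E_elem V) W) (isoV V W)"
proof (rule bij_betw_imageI)
  show "inj_on (aV V W) (QE V (E_elem V) W)"
  proof (rule inj_onI)
    fix x y assume "x \<in> QE V (E_elem V) W" "y \<in> QE V (E_elem V) W" "aV V W x = aV V W y"
    moreover from this obtain z1 z2 where "z1 \<subseteq> Hom V W" "x = alg_mult z1 (E_elem V)"
      "z2 \<subseteq> Hom V W" "y = alg_mult z2 (E_elem V)" by (auto simp: QE_iff)
    ultimately show "x = y" using aV_alg_mult_E_elem alg_mult_E_elem_eq_Int_embeddings by metis
  qed
  show "aV V W ` QE V (E_elem V) W = isoV V W"
  proof
    show "aV V W ` QE V (E_elem V) W \<subseteq> isoV V W"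
      by (auto simp: QE_iff isoV_eq_Pow_embeddings aV_alg_mult_E_elem)
    show "isoV V W \<subseteq> aV V W ` QE V (E_elem V) W"
    proof
      fix S assume "S \<in> isoV V W"
      then have "S \<subseteq> embeddings V W" by (simp add: isoV_eq_Pow_embeddings)
      then have "S \<subseteq> Hom V W" using embeddings_subset_Hom by blast
      moreover from this have "aV V W (alg_mult S (E_elem V)) = S"
        using \<open>S \<subseteq> embeddings V W\<close> by (simp add: aV_alg_mult_E_elem Int_absorb2)
      moreover have "alg_mult S (E_elem V) \<in> QE V (E_elem V) W"
        using \<open>S \<subseteq> Hom V W\<close> by (auto simp: QE_iff)
      ultimately show "S \<in> aV V W ` QE V (E_elem V) W" by (metis image_eqI)
    qed
  qed
qed

lemma aV_alg_add:
  assumes "x \<in> QE V (E_elem V) W" "y \<in> QE V (E_elem V) W"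
  shows "aV V W (alg_add x y) = alg_add (aV V W x) (aV V W y)"
proof -
  obtain z1 z2 where z: "z1 \<subseteq> Hom V W" "x = alg_mult z1 (E_elem V)"
    "z2 \<subseteq> Hom V W" "y = alg_mult z2 (E_elem V)"
    using assms by (auto simp: QE_iff)
  then have "alg_add x y = alg_mult (alg_add z1 z2) (E_elem V)"
    by (simp add: alg_mult_add_left finite_subset_Hom)
  moreover have "alg_add z1 z2 \<subseteq> Hom V W" using z by (auto simp: alg_add_def)
  ultimately have "aV V W (alg_add x y) = alg_add z1 z2 \<inter> embeddings V W"
    by (simp add: aV_alg_mult_E_elem)
  then show ?thesis using z by (auto simp: aV_alg_mult_E_elem alg_add_def)
qed

lemma alg_mult_singleton_Int_embeddings:
  assumes h: "h \<in> Hom W W'" and y: "y \<subseteq> Hom V W"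
  shows "alg_mult {h} y \<inter> embeddings V W' = scomp h ` {g \<in> y. total V (scomp h g)}"
proof (intro set_eqI iffI)
  fix k assume k: "k \<in> alg_mult {h} y \<inter> embeddings V W'"
  then obtain g where "g \<in> y" "k = scomp h g" by (auto elim: alg_multE)
  then show "k \<in> scomp h ` {g \<in> y. total V (scomp h g)}" using k by (auto simp: embeddings_def)
next
  fix k assume "k \<in> scomp h ` {g \<in> y. total V (scomp h g)}"
  then obtain g where g: "g \<in> y" "total V (scomp h g)" "k = scomp h g" by blast
  have "b = g" if "b \<in> y" "scomp h b = k" for b
  proof -
    have "b = scomp (tr h) (scomp h b)"
      using that g y by (intro tr_scomp_scomp_cancel[OF h, symmetric]) auto
    also have "\<dots> = scomp (tr h) (scomp h g)" using that g(3) by simp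
    also have "\<dots> = g" using g y by (intro tr_scomp_scomp_cancel[OF h]) auto
    finally show ?thesis .
  qed
  then have "{b \<in> y. scomp h b = k} = {g}" using g by auto
  then have "k \<in> alg_mult {h} y" by (simp add: alg_mult_singleton_left)
  moreover have "k \<in> Hom V W'" using g y h scomp_in_Hom by blast
  ultimately show "k \<in> alg_mult {h} y \<inter> embeddings V W'" using g by (simp add: embeddings_def)
qed

lemma DQmap_eq_image:
  assumes h: "h \<in> Hom W W'" and S: "S \<subseteq> embeddings V W"
  shows "DQmap V W' h S = scomp h ` {g \<in> S. total V (scomp h g)}"
proof (intro set_eqI iffI)
  fix k assume "k \<in> DQmap V W' h S"
  then have k: "k \<in> Hom V W'" "scomp (tr h) k \<in> S" by (auto simp: DQmap_def)
  then have "total V (scomp (tr h) k)" using S by (auto simp: embeddings_def)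
  then have "scomp h (scomp (tr h) k) = k" "total V k"
    using scomp_tr_scomp_cancel[OF h k(1)] total_scompD by auto
  then show "k \<in> scomp h ` {g \<in> S. total V (scomp h g)}"
    using k(2) by (auto intro: rev_image_eqI)
next
  fix k assume "k \<in> scomp h ` {g \<in> S. total V (scomp h g)}"
  then obtain g where g: "g \<in> S" "total V (scomp h g)" "k = scomp h g" by blast
  then have "g \<in> Hom V W" using S embeddings_subset_Hom by blast
  then have "scomp (tr h) k = g" "k \<in> Hom V W'"
    using tr_scomp_scomp_cancel[OF h _ g(2)] scomp_in_Hom[OF _ h] g(3) by auto
  then show "k \<in> DQmap V W' h S" using g(1) by (simp add: DQmap_def)
qed

lemma aV_natural:
  assumes h: "h \<in> Hom W W'" and x: "x \<in> QE V (E_elem V) W"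
  shows "aV V W' (Qmap h x) = DQmap V W' h (aV V W x)"
proof -
  obtain y where y: "y \<subseteq> Hom V W" "x = alg_mult y (E_elem V)" using x by (auto simp: QE_iff)
  have "Qmap h x = alg_mult (alg_mult {h} y) (E_elem V)"
    unfolding Qmap_def y(2) using finite_subset_Hom[OF y(1)] by (simp add: alg_mult_assoc)
  moreover have "alg_mult {h} y \<subseteq> Hom V W'" using h y(1) by (intro alg_mult_subset_Hom) auto
  ultimately have "aV V W' (Qmap h x) = alg_mult {h} y \<inter> embeddings V W'"
    by (simp add: aV_alg_mult_E_elem)
  also have "\<dots> = scomp h ` {g \<in> y. total V (scomp h g)}"
    by (rule alg_mult_singleton_Int_embeddings[OF h y(1)])
  also have "{g \<in> y. total V (scomp h g)} = {g \<in> y \<inter> embeddings V W. total V (scomp h g)}"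
    using y(1) by (auto simp: embeddings_def dest: total_scompD)
  also have "scomp h ` \<dots> = DQmap V W' h (y \<inter> embeddings V W)"
    by (rule DQmap_eq_image[OF h, symmetric]) auto
  also have "y \<inter> embeddings V W = aV V W x" using y by (simp add: aV_alg_mult_E_elem)
  finally show ?thesis .
qed

section \<open>Natural transformations out of \<open>iso_V\<close>\<close>

lemma F2space_sum_closed:
  assumes "is_F2space S" "\<And>x. x \<in> A \<Longrightarrow> G x \<in> S"
  shows "sum G A \<in> S"
  using assms(2)
  by (induction A rule: infinite_finite_induct) (use assms(1) in \<open>auto simp: is_F2space_def\<close>)

lemma F2space_add_self: "is_F2space S \<Longrightarrow> x \<in> S \<Longrightarrow> x + x = 0"
  by (simp add: is_F2space_def)

lemma F2space_sum_sym_diff: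
  assumes S: "is_F2space S" and "finite A" "finite B" and G: "\<And>x. x \<in> A \<union> B \<Longrightarrow> G x \<in> S"
  shows "sum G (sym_diff A B) = sum G A + sum G B"
proof -
  have "sum G (sym_diff A B) = sum G (A - B) + sum G (B - A)"
    using assms by (intro sum.union_disjoint) auto
  moreover have "sum G A = sum G (A \<inter> B) + sum G (A - B)" "sum G B = sum G (A \<inter> B) + sum G (B - A)"
    using sum.Int_Diff[OF \<open>finite A\<close>, of G B] sum.Int_Diff[OF \<open>finite B\<close>, of G A]
    by (simp_all add: Int_commute)
  moreover have "sum G (A \<inter> B) + sum G (A \<inter> B) = 0"
    using G by (intro F2space_add_self[OF S] F2space_sum_closed[OF S]) auto
  ultimately show ?thesis by (simp add: algebra_simps)
qed

lemma F2space_sum_odd_fibres: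
  assumes S: "is_F2space S" and "finite X" and G: "\<And>e. e \<in> X \<Longrightarrow> G (f e) \<in> S"
  shows "(\<Sum>e\<in>X. G (f e)) = sum G {h. odd (card {e \<in> X. f e = h})}"
  using \<open>finite X\<close> G
proof (induction X rule: finite_induct)
  case (insert x X)
  let ?M = "\<lambda>X. {h. odd (card {e \<in> X. f e = h})}"
  have "?M X \<subseteq> f ` X"
  proof
    fix h assume "h \<in> ?M X"
    then have "{e \<in> X. f e = h} \<noteq> {}" by (auto simp del: Collect_empty_eq)
    then show "h \<in> f ` X" by blast
  qed
  then have "finite (?M X)" using insert(1) finite_subset by blast
  have "card {e \<in> insert x X. f e = h} =
      (if f x = h then Suc (card {e \<in> X. f e = h}) else card {e \<in> X. f e = h})" for h
  proof (cases "f x = h")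
    case True
    then have "{e \<in> insert x X. f e = h} = insert x {e \<in> X. f e = h}" by auto
    then show ?thesis using True insert(1,2) by simp
  next
    case False
    then have "{e \<in> insert x X. f e = h} = {e \<in> X. f e = h}" by auto
    then show ?thesis using False by simp
  qed
  then have "?M (insert x X) = sym_diff (?M X) {f x}" by auto
  also have "sum G \<dots> = sum G (?M X) + G (f x)"
    using \<open>finite (?M X)\<close> \<open>?M X \<subseteq> f ` X\<close> insert.prems
    by (subst F2space_sum_sym_diff[OF S]) auto
  finally show ?case using insert by (simp add: add.commute)
qed simp

locale F2_functor =
  fixes Fob :: "qobj \<Rightarrow> 'b::ab_group_add set" and Fmor :: "qobj \<Rightarrow> qobj \<Rightarrow> mor \<Rightarrow> 'b \<Rightarrow> 'b"
  assumes is_functor: "is_functor Fob Fmor"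
begin

lemma F2space: "is_qobj W \<Longrightarrow> is_F2space (Fob W)"
  using is_functor unfolding is_functor_def by blast

lemma map_closed:
  "is_qobj W \<Longrightarrow> is_qobj W' \<Longrightarrow> h \<in> Hom W W' \<Longrightarrow> x \<in> Fob W \<Longrightarrow> Fmor W W' h x \<in> Fob W'"
  using is_functor unfolding is_functor_def by blast

lemma map_add:
  "is_qobj W \<Longrightarrow> is_qobj W' \<Longrightarrow> h \<in> Hom W W' \<Longrightarrow> x \<in> Fob W \<Longrightarrow> y \<in> Fob W \<Longrightarrow>
    Fmor W W' h (x + y) = Fmor W W' h x + Fmor W W' h y"
  using is_functor unfolding is_functor_def by blast

lemma map_idm: "is_qobj W \<Longrightarrow> x \<in> Fob W \<Longrightarrow> Fmor W W (idm W) x = x"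
  using is_functor unfolding is_functor_def by blast

lemma map_scomp:
  "is_qobj W1 \<Longrightarrow> is_qobj W2 \<Longrightarrow> is_qobj W3 \<Longrightarrow> f \<in> Hom W1 W2 \<Longrightarrow> g \<in> Hom W2 W3 \<Longrightarrow>
    x \<in> Fob W1 \<Longrightarrow> Fmor W1 W3 (scomp g f) x = Fmor W2 W3 g (Fmor W1 W2 f x)"
  using is_functor unfolding is_functor_def by blast

lemma map_sum:
  assumes "is_qobj W" "is_qobj W'" "h \<in> Hom W W'" "finite X" "\<And>e. e \<in> X \<Longrightarrow> G e \<in> Fob W"
  shows "Fmor W W' h (sum G X) = (\<Sum>e\<in>X. Fmor W W' h (G e))"
  using assms(4,5)
proof (induction X rule: finite_induct)
  case empty
  have "0 \<in> Fob W" using F2space[OF assms(1)] by (simp add: is_F2space_def)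
  then have "Fmor W W' h 0 \<in> Fob W'" by (rule map_closed[OF assms(1-3)])
  then have "Fmor W W' h 0 + Fmor W W' h 0 = 0" by (rule F2space_add_self[OF F2space[OF assms(2)]])
  moreover have "Fmor W W' h 0 = Fmor W W' h 0 + Fmor W W' h 0"
    using map_add[OF assms(1-3) \<open>0 \<in> Fob W\<close> \<open>0 \<in> Fob W\<close>] by simp
  ultimately show ?case by simp
next
  case (insert x X)
  then have "sum G X \<in> Fob W" using F2space_sum_closed[OF F2space[OF assms(1)]] by blast
  then show ?case using insert map_add[OF assms(1-3)] by simp
qed

lemma map_Falg:
  assumes "is_qobj V" "is_qobj W" "k \<in> Hom V W" "X \<subseteq> Hom V V" "finite X" "u \<in> Fob V"
  shows "Fmor V W k (Falg Fmor V X u) = (\<Sum>h\<in>alg_mult {k} X. Fmor V W h u)"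
proof -
  have "Fmor V W k (Falg Fmor V X u) = (\<Sum>e\<in>X. Fmor V W k (Fmor V V e u))"
    unfolding Falg_def using assms by (intro map_sum map_closed) auto
  also have "\<dots> = (\<Sum>e\<in>X. Fmor V W (scomp k e) u)"
    using assms by (intro sum.cong refl map_scomp[symmetric]) auto
  also have "\<dots> = (\<Sum>h\<in>alg_mult {k} X. Fmor V W h u)"
    unfolding alg_mult_singleton_left using assms
    by (intro F2space_sum_odd_fibres[OF F2space[OF assms(2)]] map_closed[OF assms(1,2)] scomp_in_Hom)
      auto
  finally show ?thesis .
qed

end

lemma nat_trans_iso_eq_0:
  "\<tau> \<in> nat_trans_iso V Fob Fmor \<Longrightarrow> \<not> is_qobj W \<or> S \<notin> isoV V W \<Longrightarrow> \<tau> W S = 0"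
  unfolding nat_trans_iso_def by blast

lemma nat_trans_iso_closed:
  "\<tau> \<in> nat_trans_iso V Fob Fmor \<Longrightarrow> is_qobj W \<Longrightarrow> S \<in> isoV V W \<Longrightarrow> \<tau> W S \<in> Fob W"
  unfolding nat_trans_iso_def by blast

lemma nat_trans_iso_add:
  "\<tau> \<in> nat_trans_iso V Fob Fmor \<Longrightarrow> is_qobj W \<Longrightarrow> S \<in> isoV V W \<Longrightarrow> T \<in> isoV V W \<Longrightarrow>
    \<tau> W (alg_add S T) = \<tau> W S + \<tau> W T"
  unfolding nat_trans_iso_def by blast

lemma nat_trans_iso_natural:
  "\<tau> \<in> nat_trans_iso V Fob Fmor \<Longrightarrow> is_qobj W \<Longrightarrow> is_qobj W' \<Longrightarrow> h \<in> Hom W W' \<Longrightarrow>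
    S \<in> isoV V W \<Longrightarrow> \<tau> W' (DQmap V W' h S) = Fmor W W' h (\<tau> W S)"
  unfolding nat_trans_iso_def by blast

lemma DQmap_subset_embeddings: "S \<subseteq> embeddings V W \<Longrightarrow> DQmap V W' h S \<subseteq> embeddings V W'"
  by (auto simp: DQmap_def embeddings_def dest: total_scompD)

lemma DQmap_idm:
  assumes "g \<in> embeddings V W"
  shows "DQmap V W g {idm V} = {g}"
  using assms tr_scomp_eq_idm_iff[of g V W] by (auto simp: DQmap_def embeddings_def)

definition nat_trans_of :: "qobj \<Rightarrow> (qobj \<Rightarrow> qobj \<Rightarrow> mor \<Rightarrow> 'b::ab_group_add \<Rightarrow> 'b) \<Rightarrow> 'b \<Rightarrow> qobj \<Rightarrow> mor set \<Rightarrow> 'b"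
  where "nat_trans_of V Fmor w W S =
    (if is_qobj W \<and> S \<in> isoV V W then \<Sum>g\<in>S. Fmor V W g w else 0)"

locale iso_yoneda = F2_functor Fob Fmor for Fob :: "qobj \<Rightarrow> 'b::ab_group_add set" and Fmor +
  fixes V :: qobj
  assumes qobj_V: "is_qobj V"
begin

lemma nat_trans_iso_empty:
  assumes "\<tau> \<in> nat_trans_iso V Fob Fmor" "is_qobj W"
  shows "\<tau> W {} = 0"
proof -
  have "{} \<in> isoV V W" by (simp add: isoV_eq_Pow_embeddings)
  then have "\<tau> W {} = \<tau> W {} + \<tau> W {}"
    using nat_trans_iso_add[OF assms, of "{}" "{}"] by simp
  moreover have "\<tau> W {} + \<tau> W {} = 0"
    using \<open>{} \<in> isoV V W\<close> assms
    by (intro F2space_add_self[OF F2space[OF assms(2)]] nat_trans_iso_closed)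
  ultimately show ?thesis by simp
qed

lemma nat_trans_iso_eq_sum:
  assumes \<tau>: "\<tau> \<in> nat_trans_iso V Fob Fmor" and W: "is_qobj W" and S: "S \<subseteq> embeddings V W"
  shows "\<tau> W S = (\<Sum>g\<in>S. Fmor V W g (\<tau> V {idm V}))"
  using finite_subset[OF S finite_embeddings] S
proof (induction S rule: finite_induct)
  case empty
  then show ?case using nat_trans_iso_empty[OF \<tau> W] by simp
next
  case (insert g S)
  then have g: "g \<in> embeddings V W" by simp
  then have "g \<in> Hom V W" using embeddings_subset_Hom by blast
  have "\<tau> W {g} = \<tau> W (DQmap V W g {idm V})" by (simp add: DQmap_idm[OF g])
  also have "\<dots> = Fmor V W g (\<tau> V {idm V})"
    using idm_in_embeddings \<open>g \<in> Hom V W\<close>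
    by (intro nat_trans_iso_natural[OF \<tau> qobj_V W]) (auto simp: isoV_eq_Pow_embeddings)
  finally have single: "\<tau> W {g} = Fmor V W g (\<tau> V {idm V})" .
  have "\<tau> W (insert g S) = \<tau> W (alg_add {g} S)" by (simp add: insert_eq_alg_add[OF insert(2)])
  also have "\<dots> = \<tau> W {g} + \<tau> W S"
    using insert.prems g by (intro nat_trans_iso_add[OF \<tau> W]) (auto simp: isoV_eq_Pow_embeddings)
  finally show ?case using single insert by simp
qed

lemma nat_trans_iso_at_idm:
  assumes \<tau>: "\<tau> \<in> nat_trans_iso V Fob Fmor"
  shows "\<tau> V {idm V} \<in> Falg Fmor V (E_elem V) ` Fob V"
proof -
  let ?w = "\<tau> V {idm V}"
  have idm: "{idm V} \<in> isoV V V" using idm_in_embeddings by (simp add: isoV_eq_Pow_embeddings)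
  then have w: "?w \<in> Fob V" by (rule nat_trans_iso_closed[OF \<tau> qobj_V])
  have vanish: "Fmor V V e ?w = 0" if e: "e \<in> E_elem V - {idm V}" for e
  proof -
    obtain U where U: "U \<in> proper_subobjs V" "e = Id_on U"
      using E_elem_minus_idm[OF e] by (auto simp: e_sub_def)
    have "U \<in> subobjs V" "U \<subset> qcarrier V" using proper_subobjsD[OF U(1)] by auto
    then have "e \<in> Hom V V" "\<not> total V e"
      using U(2) Id_on_in_Hom[of U V] by (auto simp: total_def)
    then have "DQmap V V e {idm V} = {}"
      using tr_scomp_eq_idm_iff[OF \<open>e \<in> Hom V V\<close>] by (auto simp: DQmap_def)
    then show ?thesis
      using nat_trans_iso_natural[OF \<tau> qobj_V qobj_V \<open>e \<in> Hom V V\<close> idm]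
        nat_trans_iso_empty[OF \<tau> qobj_V] by simp
  qed
  have "Falg Fmor V (E_elem V) ?w = Fmor V V (idm V) ?w + (\<Sum>e\<in>E_elem V - {idm V}. Fmor V V e ?w)"
    unfolding Falg_def using finite_E_elem idm_in_E_elem by (rule sum.remove)
  also have "(\<Sum>e\<in>E_elem V - {idm V}. Fmor V V e ?w) = 0"
    using vanish by (intro sum.neutral) blast
  finally have "Falg Fmor V (E_elem V) ?w = ?w" using map_idm[OF qobj_V w] by simp
  then show ?thesis using w by (metis image_eqI)
qed

lemma Fmor_not_total_Falg_E_elem:
  assumes "is_qobj W" "u \<in> Fob V" "k \<in> Hom V W" "\<not> total V k"
  shows "Fmor V W k (Falg Fmor V (E_elem V) u) = 0"
  using assms qobj_V E_elem_subset_Hom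
  by (simp add: map_Falg not_total_mult_E_elem)

lemma nat_trans_of_at_idm: "w \<in> Fob V \<Longrightarrow> nat_trans_of V Fmor w V {idm V} = w"
  using idm_in_embeddings map_idm[OF qobj_V] qobj_V
  by (simp add: nat_trans_of_def isoV_eq_Pow_embeddings)

lemma Falg_E_elem_closed: "u \<in> Fob V \<Longrightarrow> Falg Fmor V (E_elem V) u \<in> Fob V"
  unfolding Falg_def using E_elem_subset_Hom[of V]
  by (intro F2space_sum_closed[OF F2space[OF qobj_V]] map_closed[OF qobj_V qobj_V]) auto

lemma sum_Fmor_closed:
  "is_qobj W \<Longrightarrow> S \<subseteq> Hom V W \<Longrightarrow> w \<in> Fob V \<Longrightarrow> (\<Sum>g\<in>S. Fmor V W g w) \<in> Fob W"
  by (intro F2space_sum_closed[OF F2space] map_closed[OF qobj_V]) auto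

text \<open>Only compositions that stay total survive, because \<open>F(g) F(E_V) = 0\<close> for non-total \<open>g\<close>.\<close>

lemma nat_trans_of_natural:
  assumes u: "u \<in> Fob V" and W: "is_qobj W" and W': "is_qobj W'" and h: "h \<in> Hom W W'"
    and S: "S \<subseteq> embeddings V W"
  defines "w \<equiv> Falg Fmor V (E_elem V) u"
  shows "(\<Sum>k\<in>DQmap V W' h S. Fmor V W' k w) = Fmor W W' h (\<Sum>g\<in>S. Fmor V W g w)"
proof -
  have w: "w \<in> Fob V" unfolding w_def using u by (rule Falg_E_elem_closed)
  have S_Hom: "S \<subseteq> Hom V W" using S embeddings_subset_Hom by blast
  have "finite S" using S_Hom by (rule finite_subset_Hom)
  let ?S1 = "{g \<in> S. total V (scomp h g)}"
  have "inj_on (scomp h) ?S1"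
  proof (rule inj_onI)
    fix g g' assume g: "g \<in> ?S1" "g' \<in> ?S1" and "scomp h g = scomp h g'"
    then have "scomp (tr h) (scomp h g) = scomp (tr h) (scomp h g')" by simp
    moreover have "g \<in> Hom V W" "g' \<in> Hom V W" using g S_Hom by auto
    ultimately show "g = g'" using g by (simp add: tr_scomp_scomp_cancel[OF h])
  qed
  then have "(\<Sum>k\<in>DQmap V W' h S. Fmor V W' k w) = (\<Sum>g\<in>?S1. Fmor V W' (scomp h g) w)"
    by (simp add: DQmap_eq_image[OF h S] sum.reindex)
  also have "\<dots> = (\<Sum>g\<in>S. Fmor V W' (scomp h g) w)"
  proof (rule sum.mono_neutral_left[OF \<open>finite S\<close>])
    show "\<forall>g\<in>S - ?S1. Fmor V W' (scomp h g) w = 0"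
      using S_Hom h W' u unfolding w_def
      by (auto intro: Fmor_not_total_Falg_E_elem scomp_in_Hom)
  qed auto
  also have "\<dots> = (\<Sum>g\<in>S. Fmor W W' h (Fmor V W g w))"
    using S_Hom by (intro sum.cong refl map_scomp[OF qobj_V W W' _ h w]) auto
  also have "\<dots> = Fmor W W' h (\<Sum>g\<in>S. Fmor V W g w)"
    using S_Hom \<open>finite S\<close> by (intro map_sum[OF W W' h, symmetric] map_closed[OF qobj_V W _ w]) auto
  finally show ?thesis .
qed

lemma nat_trans_of_in_nat_trans_iso:
  assumes u: "u \<in> Fob V"
  shows "nat_trans_of V Fmor (Falg Fmor V (E_elem V) u) \<in> nat_trans_iso V Fob Fmor"
proof -
  define w where "w = Falg Fmor V (E_elem V) u"
  have w: "w \<in> Fob V" unfolding w_def using u by (rule Falg_E_elem_closed)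
  have "nat_trans_of V Fmor w W (alg_add S T) = nat_trans_of V Fmor w W S + nat_trans_of V Fmor w W T"
    if W: "is_qobj W" and "S \<in> isoV V W" "T \<in> isoV V W" for W S T
  proof -
    have ST: "S \<subseteq> embeddings V W" "T \<subseteq> embeddings V W"
      using that by (auto simp: isoV_eq_Pow_embeddings)
    then have "alg_add S T \<in> isoV V W" by (auto simp: isoV_eq_Pow_embeddings alg_add_def)
    moreover have "(\<Sum>g\<in>alg_add S T. Fmor V W g w) = (\<Sum>g\<in>S. Fmor V W g w) + (\<Sum>g\<in>T. Fmor V W g w)"
      unfolding alg_add_def using ST embeddings_subset_Hom[of V W]
      by (intro F2space_sum_sym_diff[OF F2space[OF W]] map_closed[OF qobj_V W _ w])
        (auto intro: finite_subset)
    ultimately show ?thesis using that by (simp add: nat_trans_of_def)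
  qed
  moreover have "nat_trans_of V Fmor w W' (DQmap V W' h S) = Fmor W W' h (nat_trans_of V Fmor w W S)"
    if "is_qobj W" "is_qobj W'" "h \<in> Hom W W'" "S \<in> isoV V W" for W W' h S
    using that nat_trans_of_natural[OF u that(1-3)] DQmap_subset_embeddings
    by (simp add: nat_trans_of_def isoV_eq_Pow_embeddings w_def)
  moreover have "nat_trans_of V Fmor w W S \<in> Fob W" if "is_qobj W" "S \<in> isoV V W" for W S
    using that embeddings_subset_Hom[of V W] sum_Fmor_closed[OF that(1) _ w]
    by (auto simp: nat_trans_of_def isoV_eq_Pow_embeddings)
  ultimately show ?thesis unfolding nat_trans_iso_def w_def by (auto simp: nat_trans_of_def)
qed

lemma bij_betw_nat_trans_iso_Falg_image:
  "bij_betw (\<lambda>\<tau>. \<tau> V {idm V}) (nat_trans_iso V Fob Fmor) (Falg Fmor V (E_elem V) ` Fob V)"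
proof (rule bij_betw_imageI)
  show "inj_on (\<lambda>\<tau>. \<tau> V {idm V}) (nat_trans_iso V Fob Fmor)"
  proof (rule inj_onI)
    fix \<tau> \<sigma> assume \<tau>: "\<tau> \<in> nat_trans_iso V Fob Fmor" and \<sigma>: "\<sigma> \<in> nat_trans_iso V Fob Fmor"
      and at_idm: "\<tau> V {idm V} = \<sigma> V {idm V}"
    have "\<tau> W S = \<sigma> W S" for W S
    proof (cases "is_qobj W \<and> S \<in> isoV V W")
      case True
      then show ?thesis
        using nat_trans_iso_eq_sum[OF \<tau>] nat_trans_iso_eq_sum[OF \<sigma>] at_idm
        by (simp add: isoV_eq_Pow_embeddings)
    next
      case False
      then show ?thesis using nat_trans_iso_eq_0[OF \<tau>] nat_trans_iso_eq_0[OF \<sigma>] by simp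
    qed
    then show "\<tau> = \<sigma>" by blast
  qed
  show "(\<lambda>\<tau>. \<tau> V {idm V}) ` nat_trans_iso V Fob Fmor = Falg Fmor V (E_elem V) ` Fob V"
  proof
    show "(\<lambda>\<tau>. \<tau> V {idm V}) ` nat_trans_iso V Fob Fmor \<subseteq> Falg Fmor V (E_elem V) ` Fob V"
      using nat_trans_iso_at_idm by blast
    show "Falg Fmor V (E_elem V) ` Fob V \<subseteq> (\<lambda>\<tau>. \<tau> V {idm V}) ` nat_trans_iso V Fob Fmor"
    proof
      fix w assume "w \<in> Falg Fmor V (E_elem V) ` Fob V"
      then obtain u where u: "u \<in> Fob V" and w: "w = Falg Fmor V (E_elem V) u" by blast
      then have "w = nat_trans_of V Fmor w V {idm V}"
        using Falg_E_elem_closed nat_trans_of_at_idm by simp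
      then show "w \<in> (\<lambda>\<tau>. \<tau> V {idm V}) ` nat_trans_iso V Fob Fmor"
        using nat_trans_of_in_nat_trans_iso[OF u] w by (auto intro: rev_image_eqI)
    qed
  qed
qed

end

theorem proposition4p32:
  fixes V :: qobj
  assumes "is_qobj V"
  shows "alg_mult (E_elem V) (E_elem V) = E_elem V \<and>
    (\<exists>\<phi>. \<forall>W. is_qobj W \<longrightarrow>
           bij_betw (\<phi> W) (QE V (E_elem V) W) (isoV V W) \<and>
           (\<forall>x\<in>QE V (E_elem V) W. \<forall>y\<in>QE V (E_elem V) W.
              \<phi> W (alg_add x y) = alg_add (\<phi> W x) (\<phi> W y)) \<and>
           (\<forall>W' h. is_qobj W' \<longrightarrow> h \<in> Hom W W' \<longrightarrow>
              (\<forall>x\<in>QE V (E_elem V) W. \<phi> W' (Qmap h x) = DQmap V W' h (\<phi> W x)))) \<and>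
    (\<forall>(Fob :: qobj \<Rightarrow> 'b::ab_group_add set) Fmor. is_functor Fob Fmor \<longrightarrow>
           (\<exists>\<Phi>. bij_betw \<Phi> (nat_trans_iso V Fob Fmor) (Falg Fmor V (E_elem V) ` Fob V) \<and>
              (\<forall>\<tau>\<in>nat_trans_iso V Fob Fmor. \<forall>\<sigma>\<in>nat_trans_iso V Fob Fmor.
                 \<Phi> (\<lambda>W S. \<tau> W S + \<sigma> W S) = \<Phi> \<tau> + \<Phi> \<sigma>)))"
proof (intro conjI allI impI)
  show "alg_mult (E_elem V) (E_elem V) = E_elem V" by (rule E_elem_idem)
  show "\<exists>\<phi>. \<forall>W. is_qobj W \<longrightarrow>
           bij_betw (\<phi> W) (QE V (E_elem V) W) (isoV V W) \<and>
           (\<forall>x\<in>QE V (E_elem V) W. \<forall>y\<in>QE V (E_elem V) W.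
              \<phi> W (alg_add x y) = alg_add (\<phi> W x) (\<phi> W y)) \<and>
           (\<forall>W' h. is_qobj W' \<longrightarrow> h \<in> Hom W W' \<longrightarrow>
              (\<forall>x\<in>QE V (E_elem V) W. \<phi> W' (Qmap h x) = DQmap V W' h (\<phi> W x)))"
    by (intro exI[of _ "aV V"] allI impI conjI ballI aV_bij_betw_QE_isoV aV_alg_add aV_natural)
next
  fix Fob :: "qobj \<Rightarrow> 'b::ab_group_add set" and Fmor
  assume "is_functor Fob Fmor"
  then interpret iso_yoneda Fob Fmor V
    using assms by unfold_locales
  show "\<exists>\<Phi>. bij_betw \<Phi> (nat_trans_iso V Fob Fmor) (Falg Fmor V (E_elem V) ` Fob V) \<and>
      (\<forall>\<tau>\<in>nat_trans_iso V Fob Fmor. \<forall>\<sigma>\<in>nat_trans_iso V Fob Fmor.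
         \<Phi> (\<lambda>W S. \<tau> W S + \<sigma> W S) = \<Phi> \<tau> + \<Phi> \<sigma>)"
    by (intro exI[of _ "\<lambda>\<tau>. \<tau> V {idm V}"] conjI ballI bij_betw_nat_trans_iso_Falg_image) simp
qed

end
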